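(* Let $n,x$ be integers with $1<x<n$, so that $G=C_{2n}(x,1,n)$ is a $5$-regular circulant graph. If $n\equiv x\equiv 0\pmod 3$ and $\tfrac{n}{2}\leq x\leq n$, then $G$ is word-representable.
   Context: Two distinct letters $x,y$ alternate in a word $w$ if, after deleting all other letters from $w$, the resulting word is of the form $xyxy\cdots$ or $yxyx\cdots$ (of even or odd length). A graph $G=(V,E)$ is word-representable if there is a word $w$ over the alphabet $V$, containing every letter of $V$ at least once, such that for all distinct $x,y\in V$, $xy\in E$ if and only if $x$ and $y$ alternate in $w$. For an integer $m$ and a set $R$ of positive integers each at most $m/2$, the circulant graph $C_m(R)$ has vertex set $\{0,1,\dots,m-1\}$, with $i$ and $j$ adjacent iff $\min(|i-j|,\,m-|i-j|)\in R$. $C_{2n}(x,1,n)$ denotes the circulant graph on $2n$ vertices with jump set $\{1,x,n\}$; it is $5$-regular exactly when $1<x<n$. *)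

theory Defs
  imports Main
begin

definition alternate :: "'a list \<Rightarrow> 'a \<Rightarrow> 'a \<Rightarrow> bool" where
  "alternate w x y \<longleftrightarrow>
     (let u = filter (\<lambda>z. z = x \<or> z = y) w in
      \<forall>i. Suc i < length u \<longrightarrow> u ! i \<noteq> u ! Suc i)"

definition word_representable :: "'a set \<Rightarrow> ('a \<Rightarrow> 'a \<Rightarrow> bool) \<Rightarrow> bool" where
  "word_representable V E \<longleftrightarrow>
     (\<exists>w. set w = V \<and>
          (\<forall>x\<in>V. \<forall>y\<in>V. x \<noteq> y \<longrightarrow> (E x y \<longleftrightarrow> alternate w x y)))"

definition circ_vertices :: "nat \<Rightarrow> nat set" where
  "circ_vertices m = {0..<m}"

definition circ_adj :: "nat \<Rightarrow> nat set \<Rightarrow> nat \<Rightarrow> nat \<Rightarrow> bool" where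
  "circ_adj m R i j \<longleftrightarrow>
     (let d = (if i \<le> j then j - i else i - j) in min d (m - d) \<in> R)"

end

theory Submission
  imports Defs
begin

(* Colour the vertices properly with colours 0..3 and orient every edge towards
  the larger colour. If every 4-cycle a b c d coloured 0, 1, 2, 3 in this order has both
  diagonals, the graph is word-representable: list the vertices by colour, then append for
  every vertex v a word containing each vertex twice, arranged so that every arc x -> y
  restricts to x y x y, while v v becomes a factor once only v and a vertex that is neither
  a successor nor a predecessor of v are kept.

  If n < 2x, then C_2n(1, x, n) is even 3-coloured by i |-> (i + floor (k i / 2n)) mod 3
  for a suitable odd multiple k of 3. If n = 2x, write i = q x + r with q < 4, r < x and
  colour i by (r mod 2 + 3 q) mod 4. Along an edge on which the colour grows by one, the
  rank of r (0 for r = 0, 1 for even r > 0, 2 for odd r) never drops, and it stays the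
  same only if r is kept and q drops by one modulo 4. Going around a 4-cycle coloured
  0, 1, 2, 3 the rank returns to its start, so both diagonals join vertices 2x apart. *)

fun xy_repeated :: "'a \<Rightarrow> 'a \<Rightarrow> 'a list \<Rightarrow> bool" where
  "xy_repeated x y [] = True"
| "xy_repeated x y [_] = False"
| "xy_repeated x y (a # b # l) \<longleftrightarrow> a = x \<and> b = y \<and> xy_repeated x y l"

lemma xy_repeated_append:
  "xy_repeated x y l \<Longrightarrow> xy_repeated x y l' \<Longrightarrow> xy_repeated x y (l @ l')"
  by (induction x y l rule: xy_repeated.induct) auto

lemma xy_repeated_concat:
  "(\<And>l. l \<in> set ls \<Longrightarrow> xy_repeated x y l) \<Longrightarrow> xy_repeated x y (concat ls)"
  by (induction ls) (auto simp: xy_repeated_append)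

lemma xy_repeated_nth:
  "xy_repeated x y l \<Longrightarrow> i < length l \<Longrightarrow> l ! i = (if even i then x else y)"
  by (induction x y l arbitrary: i rule: xy_repeated.induct) (auto simp: nth_Cons split: nat.split)

lemma alternate_if_xy_repeated:
  assumes "x \<noteq> y" "xy_repeated x y (filter (\<lambda>z. z = x \<or> z = y) w)"
  shows "alternate w x y"
  using assms xy_repeated_nth[OF assms(2)] unfolding alternate_def Let_def by auto

lemma not_alternate_if_square:
  assumes "filter (\<lambda>z. z = x \<or> z = y) w = p @ [z, z] @ q"
  shows "\<not> alternate w x y"
  unfolding alternate_def Let_def assms by (auto intro!: exI[of _ "length p"] simp: nth_append)

lemma alternate_commute: "alternate w x y = alternate w y x"
  unfolding alternate_def by (simp add: disj_commute)

lemma filter_eq_singleton_if_distinct: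
  "distinct l \<Longrightarrow> x \<in> set l \<Longrightarrow> filter (\<lambda>z. z = x \<and> P z) l = filter P [x]"
  by (induction l) (auto simp: filter_empty_conv)

lemma filter_ordered_pair:
  assumes "distinct (l @ l')" "x \<in> set l" "y \<in> set l'"
  shows "filter (\<lambda>z. z = x \<or> z = y) (filter P (l @ l')) = filter P [x, y]"
proof -
  have "y \<notin> set l" "x \<notin> set l'" using assms by auto
  then have "filter (\<lambda>z. P z \<and> (z = x \<or> z = y)) l = filter (\<lambda>z. z = x \<and> P z) l"
    and "filter (\<lambda>z. P z \<and> (z = x \<or> z = y)) l' = filter (\<lambda>z. z = y \<and> P z) l'"
    by (auto intro: filter_cong)
  then show ?thesis
    using assms filter_eq_singleton_if_distinct[of l x P] filter_eq_singleton_if_distinct[of l' y P]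
    by simp
qed

locale layered_graph =
  fixes V :: "'a set" and E :: "'a \<Rightarrow> 'a \<Rightarrow> bool" and layer :: "'a \<Rightarrow> nat" and L :: "'a list"
  assumes distinct_L: "distinct L" and set_L: "set L = V" and sorted_L: "sorted (map layer L)"
    and E_sym: "\<And>u v. E u v \<Longrightarrow> E v u"
    and layer_less_4: "\<And>u. u \<in> V \<Longrightarrow> layer u < 4"
    and layer_proper: "\<And>u v. u \<in> V \<Longrightarrow> v \<in> V \<Longrightarrow> E u v \<Longrightarrow> layer u \<noteq> layer v"
    and chords: "\<And>a b c d. a \<in> V \<Longrightarrow> b \<in> V \<Longrightarrow> c \<in> V \<Longrightarrow> d \<in> V \<Longrightarrow>
      layer a = 0 \<Longrightarrow> layer b = 1 \<Longrightarrow> layer c = 2 \<Longrightarrow> layer d = 3 \<Longrightarrow>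
      E a b \<Longrightarrow> E b c \<Longrightarrow> E c d \<Longrightarrow> E a d \<Longrightarrow> E a c \<and> E b d"
begin

definition arc :: "'a \<Rightarrow> 'a \<Rightarrow> bool" where
  "arc u v \<longleftrightarrow> u \<in> V \<and> v \<in> V \<and> E u v \<and> layer u < layer v"

lemma arc_trancl_layer_less: "arc\<^sup>+\<^sup>+ u v \<Longrightarrow> layer u < layer v"
  by (induction rule: tranclp.induct) (auto simp: arc_def)

lemma arc_trancl_layer_less_4: "arc\<^sup>+\<^sup>+ u v \<Longrightarrow> layer v < 4"
  by (induction rule: tranclp.induct) (auto simp: arc_def layer_less_4)

lemma arc_trancl_skips_layer:
  assumes "arc\<^sup>+\<^sup>+ u v" "\<not> arc u v"
  shows "layer u + 2 \<le> layer v"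
proof -
  obtain y where "arc\<^sup>+\<^sup>+ u y" "arc y v" using assms by (blast elim: tranclp.cases)
  then have "layer u < layer y" "layer y < layer v"
    using arc_trancl_layer_less by (auto simp: arc_def)
  then show ?thesis by simp
qed

lemma arc_out_of_middle:
  assumes "arc\<^sup>+\<^sup>+ x v" "arc\<^sup>+\<^sup>+ v y" "arc x y"
  shows "arc v y"
proof (rule ccontr)
  assume not_arc: "\<not> arc v y"
  obtain z where vz: "arc v z" and "arc\<^sup>*\<^sup>* z y"
    using tranclpD[OF assms(2)] by blast
  with not_arc have zy: "arc\<^sup>+\<^sup>+ z y" by (auto dest: rtranclpD)
  have "layer x < layer v" "layer v + 2 \<le> layer y" "layer y < 4" "layer v < layer z" "layer z < layer y"
    using arc_trancl_layer_less[OF assms(1)] arc_trancl_skips_layer[OF assms(2) not_arc]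
      arc_trancl_layer_less_4[OF assms(2)] vz arc_trancl_layer_less[OF zy]
    by (auto simp: arc_def)
  then have layers: "layer x = 0" "layer v = 1" "layer z = 2" "layer y = 3" by linarith+
  have "arc x v" "arc z y"
    using assms(1) zy arc_trancl_skips_layer layers by fastforce+
  then have "E v y"
    using chords[of x v z y] vz assms(3) layers by (auto simp: arc_def)
  then show False using not_arc vz assms(3) layers by (auto simp: arc_def)
qed

lemma arc_to_middle:
  assumes "arc\<^sup>+\<^sup>+ v x" "arc x y" "arc v y"
  shows "arc v x"
proof (rule ccontr)
  assume not_arc: "\<not> arc v x"
  obtain z where vz: "arc v z" and "arc\<^sup>*\<^sup>* z x"
    using tranclpD[OF assms(1)] by blast
  with not_arc have zx: "arc\<^sup>+\<^sup>+ z x" by (auto dest: rtranclpD)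
  have "layer v + 2 \<le> layer x" "layer x < layer y" "layer y < 4" "layer v < layer z" "layer z < layer x"
    using arc_trancl_skips_layer[OF assms(1) not_arc] assms(2) vz arc_trancl_layer_less[OF zx]
    by (auto simp: arc_def layer_less_4)
  then have layers: "layer v = 0" "layer z = 1" "layer x = 2" "layer y = 3" by linarith+
  have "arc z x" using zx arc_trancl_skips_layer layers by fastforce
  then have "E v x"
    using chords[of v z x y] vz assms(2,3) layers by (auto simp: arc_def)
  then show False using not_arc vz assms(2) layers by (auto simp: arc_def)
qed

lemma filter_pair_arc:
  assumes "arc x y"
  shows "filter (\<lambda>z. z = x \<or> z = y) (filter P L) = filter P [x, y]"
proof -
  have "x \<in> set L" "y \<in> set L" "layer x < layer y" using assms set_L by (auto simp: arc_def)
  then obtain l l' where L: "L = l @ y # l'" and "x \<in> set (l @ y # l')"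
    by (metis split_list)
  moreover have "x \<notin> set (y # l')"
    using sorted_L \<open>layer x < layer y\<close> unfolding L by (auto simp: sorted_append)
  ultimately show ?thesis
    using filter_ordered_pair[of l "y # l'" x y P] distinct_L by simp
qed

definition word_at :: "'a \<Rightarrow> 'a list" where
  "word_at v = filter (\<lambda>z. z \<noteq> v \<and> \<not> arc\<^sup>+\<^sup>+ v z) L @ filter (\<lambda>z. z = v \<or> arc v z) L
    @ filter (\<lambda>z. arc\<^sup>+\<^sup>+ z v) L @ [v] @ filter (\<lambda>z. arc\<^sup>+\<^sup>+ v z \<and> \<not> arc v z) L
    @ filter (\<lambda>z. z \<noteq> v \<and> \<not> arc\<^sup>+\<^sup>+ z v) L"

lemma set_word_at: "v \<in> V \<Longrightarrow> set (word_at v) \<subseteq> V"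
  unfolding word_at_def using set_L by auto

lemma arc_trancl_irrefl: "\<not> arc\<^sup>+\<^sup>+ v v"
  using arc_trancl_layer_less by blast

lemma position_cases:
  obtains (ancestor) "arc\<^sup>+\<^sup>+ z v" "\<not> arc\<^sup>+\<^sup>+ v z" "\<not> arc v z" "z \<noteq> v"
  | (self) "z = v"
  | (child) "arc v z" "arc\<^sup>+\<^sup>+ v z" "\<not> arc\<^sup>+\<^sup>+ z v" "z \<noteq> v"
  | (descendant) "\<not> arc v z" "arc\<^sup>+\<^sup>+ v z" "\<not> arc\<^sup>+\<^sup>+ z v" "z \<noteq> v"
  | (unrelated) "\<not> arc\<^sup>+\<^sup>+ v z" "\<not> arc\<^sup>+\<^sup>+ z v" "\<not> arc v z" "z \<noteq> v"
  using arc_trancl_layer_less less_asym by (metis tranclp.r_into_trancl)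

lemma word_at_arc:
  assumes "arc x y"
  shows "filter (\<lambda>z. z = x \<or> z = y) (word_at v) = [x, y, x, y]"
proof -
  note pair = filter_pair_arc[OF assms]
  have reach: "arc\<^sup>+\<^sup>+ y v \<Longrightarrow> arc\<^sup>+\<^sup>+ x v" "arc\<^sup>+\<^sup>+ v x \<Longrightarrow> arc\<^sup>+\<^sup>+ v y"
    using assms by auto
  have x_is_v: "x = v \<Longrightarrow> arc v y \<and> \<not> arc\<^sup>+\<^sup>+ y v \<and> y \<noteq> v"
    and y_is_v: "y = v \<Longrightarrow> arc\<^sup>+\<^sup>+ x v \<and> \<not> arc\<^sup>+\<^sup>+ v x \<and> x \<noteq> v"
    using assms arc_trancl_layer_less[of y v] arc_trancl_layer_less[of v x] by (auto simp: arc_def)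
  show ?thesis
    unfolding word_at_def filter_append pair
    by (cases x v rule: position_cases; cases y v rule: position_cases)
      (simp_all add: arc_trancl_irrefl reach x_is_v y_is_v
        arc_out_of_middle[OF _ _ assms] arc_to_middle[OF _ assms])
qed

lemma word_at_square:
  assumes "v \<in> V" "u \<noteq> v" "\<not> arc v u" "\<not> arc\<^sup>+\<^sup>+ u v"
  obtains p q where "filter (\<lambda>z. z = v \<or> z = u) (word_at v) = p @ [v, v] @ q"
proof -
  have "v \<in> set L" using assms(1) set_L by simp
  have "filter (\<lambda>z. z = v \<or> z = u) (filter (\<lambda>z. z = v \<or> arc v z) L) = filter (\<lambda>z. z = v) L"
    using assms(3) by (auto intro: filter_cong)
  also have "\<dots> = [v]"
    using filter_eq_singleton_if_distinct[OF distinct_L \<open>v \<in> set L\<close>, of "\<lambda>_. True"] by simp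
  moreover have "filter (\<lambda>z. z = v \<or> z = u) (filter (\<lambda>z. arc\<^sup>+\<^sup>+ z v) L) = []"
    using assms(4) arc_trancl_irrefl[of v] by (auto simp: filter_empty_conv)
  ultimately have "filter (\<lambda>z. z = v \<or> z = u) (word_at v) =
      filter (\<lambda>z. z = v \<or> z = u) (filter (\<lambda>z. z \<noteq> v \<and> \<not> arc\<^sup>+\<^sup>+ v z) L) @ [v, v] @
      filter (\<lambda>z. z = v \<or> z = u) (filter (\<lambda>z. arc\<^sup>+\<^sup>+ v z \<and> \<not> arc v z) L
        @ filter (\<lambda>z. z \<noteq> v \<and> \<not> arc\<^sup>+\<^sup>+ z v) L)"
    unfolding word_at_def by simp
  then show ?thesis by (rule that)
qed

theorem word_representable: "word_representable V E"
proof -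
  define w where "w = L @ concat (map word_at L)"
  have set_w: "set w = V" using set_word_at set_L by (auto simp: w_def)
  have filter_w: "filter P w = filter P L @ concat (map (\<lambda>v. filter P (word_at v)) L)" for P
    by (simp add: w_def filter_concat comp_def)
  have arc_alternate: "alternate w x y" if arc: "arc x y" for x y
  proof -
    have "filter (\<lambda>z. z = x \<or> z = y) L = [x, y]"
      using filter_pair_arc[OF arc, of "\<lambda>_. True"] by simp
    then have "xy_repeated x y (filter (\<lambda>z. z = x \<or> z = y) w)"
      unfolding filter_w word_at_arc[OF arc]
      by (auto intro!: xy_repeated_append xy_repeated_concat)
    moreover have "x \<noteq> y" using arc by (auto simp: arc_def)
    ultimately show ?thesis by (simp add: alternate_if_xy_repeated)
  qed
  have not_alternate: "\<not> alternate w v u"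
    if uv: "v \<in> V" "u \<noteq> v" "\<not> arc v u" "\<not> arc\<^sup>+\<^sup>+ u v" for u v
  proof -
    obtain p q where pq: "filter (\<lambda>z. z = v \<or> z = u) (word_at v) = p @ [v, v] @ q"
      using word_at_square[OF uv] .
    obtain l l' where "L = l @ v # l'" using split_list[of v L] uv(1) set_L by auto
    then have "filter (\<lambda>z. z = v \<or> z = u) w =
      (filter (\<lambda>z. z = v \<or> z = u) L
        @ concat (map (\<lambda>a. filter (\<lambda>z. z = v \<or> z = u) (word_at a)) l) @ p)
      @ [v, v] @ (q @ concat (map (\<lambda>a. filter (\<lambda>z. z = v \<or> z = u) (word_at a)) l'))"
      unfolding filter_w using pq by simp
    then show ?thesis by (rule not_alternate_if_square)
  qed
  have "E x y \<longleftrightarrow> alternate w x y" if "x \<in> V" "y \<in> V" "x \<noteq> y" for x y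
  proof
    assume "E x y"
    then have "arc x y \<or> arc y x"
      using that layer_proper[OF that(1,2)] E_sym[of x y] by (auto simp: arc_def nat_neq_iff)
    then show "alternate w x y" using arc_alternate alternate_commute[of w y x] by blast
  next
    assume alt: "alternate w x y"
    show "E x y"
    proof (rule ccontr)
      assume "\<not> E x y"
      then have "\<not> arc x y" "\<not> arc y x" using E_sym[of y x] by (auto simp: arc_def)
      moreover have "\<not> arc\<^sup>+\<^sup>+ x y \<or> \<not> arc\<^sup>+\<^sup>+ y x"
        using arc_trancl_layer_less less_asym by blast
      ultimately show False
        using not_alternate[of x y] not_alternate[of y x] that alt alternate_commute[of w x y] by blast
    qed
  qed
  with set_w show ?thesis unfolding word_representable_def by blast
qed

end

theorem word_representable_if_layering:
  fixes V :: "'a set" and layer :: "'a \<Rightarrow> nat"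
  assumes "finite V" and "\<And>u v. E u v \<Longrightarrow> E v u"
    and "\<And>u. u \<in> V \<Longrightarrow> layer u < 4"
    and "\<And>u v. u \<in> V \<Longrightarrow> v \<in> V \<Longrightarrow> E u v \<Longrightarrow> layer u \<noteq> layer v"
    and "\<And>a b c d. a \<in> V \<Longrightarrow> b \<in> V \<Longrightarrow> c \<in> V \<Longrightarrow> d \<in> V \<Longrightarrow>
      layer a = 0 \<Longrightarrow> layer b = 1 \<Longrightarrow> layer c = 2 \<Longrightarrow> layer d = 3 \<Longrightarrow>
      E a b \<Longrightarrow> E b c \<Longrightarrow> E c d \<Longrightarrow> E a d \<Longrightarrow> E a c \<and> E b d"
  shows "word_representable V E"
proof -
  obtain xs where xs: "set xs = V" "distinct xs" using finite_distinct_list[OF assms(1)] by blast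
  interpret layered_graph V E layer "sort_key layer xs"
  proof unfold_locales
    show "distinct (sort_key layer xs)" "set (sort_key layer xs) = V"
      "sorted (map layer (sort_key layer xs))"
      using xs by simp_all
  qed (fact assms)+
  show ?thesis by (rule word_representable)
qed

corollary word_representable_if_3_colouring:
  fixes V :: "'a set" and colour :: "'a \<Rightarrow> nat"
  assumes "finite V" and "\<And>u v. E u v \<Longrightarrow> E v u"
    and "\<And>u. u \<in> V \<Longrightarrow> colour u < 3"
    and "\<And>u v. u \<in> V \<Longrightarrow> v \<in> V \<Longrightarrow> E u v \<Longrightarrow> colour u \<noteq> colour v"
  shows "word_representable V E"
  using assms(3)
  by (intro word_representable_if_layering[where layer = colour, OF assms(1,2) _ assms(4)]) force+

lemma circ_adj_commute: "circ_adj m R i j = circ_adj m R j i"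
  unfolding circ_adj_def Let_def by auto

lemma circ_adj_cases:
  assumes "i \<le> j" "j < m" "circ_adj m R i j"
  obtains (forward) d where "d \<in> R" "j = i + d"
    | (around) d where "d \<in> R" "i + m = j + d"
proof (cases "j - i \<le> m - (j - i)")
  case True
  then show ?thesis using assms that(1)[of "j - i"] by (simp add: circ_adj_def min_def)
next
  case False
  then show ?thesis using assms that(2)[of "m - (j - i)"] by (simp add: circ_adj_def min_def)
qed

definition tilted_colouring :: "nat \<Rightarrow> nat \<Rightarrow> nat \<Rightarrow> nat" where
  "tilted_colouring k M i = (i + k * i div M) mod 3"

definition good_jump :: "nat \<Rightarrow> nat \<Rightarrow> nat \<Rightarrow> bool" where
  "good_jump k M d \<longleftrightarrow>
    (d + k * d div M) mod 3 = 1 \<or> ((d + k * d div M) mod 3 = 2 \<and> k * d mod M = 0)"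

lemma tilted_colouring_add_good_jump:
  assumes "0 < M" "good_jump k M d"
  shows "tilted_colouring k M (i + d) \<noteq> tilted_colouring k M i"
proof -
  define A where "A = k * i div M"
  define B where "B = k * d div M"
  define r where "r = k * d mod M"
  define carry where "carry = (k * i mod M + r) div M"
  have div_split: "k * (i + d) div M = A + B + carry"
    unfolding A_def B_def carry_def r_def distrib_left by (rule div_add1_eq)
  have "carry \<le> 1"
  proof -
    have "k * i mod M + r < 2 * M"
      using mod_less_divisor[OF assms(1), of "k * i"] mod_less_divisor[OF assms(1), of "k * d"]
      unfolding r_def by linarith
    then show ?thesis unfolding carry_def using less_mult_imp_div_less by fastforce
  qed
  moreover have "r = 0 \<Longrightarrow> carry = 0" unfolding carry_def using assms(1) by simp
  moreover have "(d + B) mod 3 = 1 \<or> ((d + B) mod 3 = 2 \<and> r = 0)"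
    using assms(2) unfolding good_jump_def B_def r_def .
  ultimately have "(d + B + carry) mod 3 \<noteq> 0" by (cases carry) (auto simp: mod_Suc)
  moreover have "(a + s) mod 3 = a mod 3 \<Longrightarrow> s mod 3 = 0" for a s :: nat by presburger
  ultimately have "(i + A + (d + B + carry)) mod 3 \<noteq> (i + A) mod 3" by metis
  then show ?thesis unfolding tilted_colouring_def div_split A_def[symmetric] by (simp add: ac_simps)
qed

lemma tilted_colouring_add_period:
  assumes "0 < M" "3 dvd M" "3 dvd k"
  shows "tilted_colouring k M (i + M) = tilted_colouring k M i"
proof -
  have "k * (i + M) div M = k * i div M + k" using assms(1) by (simp add: distrib_left)
  moreover have "(i + M + (t + k)) mod 3 = (i + t) mod 3" for t using assms(2,3) by presburger
  ultimately show ?thesis unfolding tilted_colouring_def by simp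
qed

lemma tilted_colouring_proper:
  assumes "0 < M" "3 dvd M" "3 dvd k" "\<forall>d\<in>R. good_jump k M d"
    and "i < M" "j < M" "circ_adj M R i j"
  shows "tilted_colouring k M i \<noteq> tilted_colouring k M j"
proof -
  have "tilted_colouring k M i \<noteq> tilted_colouring k M j" if "i \<le> j" "j < M" "circ_adj M R i j" for i j
    using that
  proof (cases rule: circ_adj_cases)
    case (forward d)
    then show ?thesis using tilted_colouring_add_good_jump[OF assms(1)] assms(4) by metis
  next
    case (around d)
    then have "tilted_colouring k M i = tilted_colouring k M (j + d)"
      using tilted_colouring_add_period[OF assms(1-3), of i] by simp
    then show ?thesis using tilted_colouring_add_good_jump[OF assms(1)] assms(4) around(1) by metis
  qed
  then show ?thesis using assms(5-7) circ_adj_commute[of M R i j] by (metis nat_le_linear)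
qed

lemma good_jump_1: "0 < M \<Longrightarrow> k \<le> M \<Longrightarrow> good_jump k M 1"
  unfolding good_jump_def by (cases "k = M") simp_all

lemma good_jump_multiple_of_3:
  assumes "0 < M" "3 dvd d" "M \<le> k * d mod (3 * M)" "k * d mod (3 * M) \<le> 2 * M"
  shows "good_jump k M d"
proof -
  define q where "q = k * d div M"
  define r where "r = k * d mod M"
  have "k * d mod (3 * M) = M * (q mod 3) + r"
    unfolding q_def r_def by (metis mod_mult2_eq mult.commute)
  moreover have "r < M" unfolding r_def using assms(1) by simp
  moreover have "q mod 3 = 0 \<or> q mod 3 = 1 \<or> q mod 3 = 2" by presburger
  ultimately have "q mod 3 = 1 \<or> (q mod 3 = 2 \<and> r = 0)"
    using assms(3,4) by auto
  then show ?thesis unfolding good_jump_def q_def[symmetric] r_def[symmetric] using assms(2) by presburger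
qed

lemma good_jump_half:
  assumes "odd k" "3 dvd k" "3 dvd n" "0 < n"
  shows "good_jump k (2 * n) n"
proof -
  obtain s where k: "k = 2 * s + 1" using assms(1) oddE by blast
  have "k * n = s * (2 * n) + n" unfolding k by (simp add: algebra_simps)
  then have "k * n div (2 * n) = s" "k * n mod (2 * n) = n" using assms(4) by simp_all
  moreover have "(n + s) mod 3 = 1" using assms(2,3) unfolding k by presburger
  ultimately show ?thesis unfolding good_jump_def by simp
qed

text \<open>If \<open>2 n \<le> 3 x\<close> take \<open>k = 3\<close>. Otherwise take \<open>k = 12 j + 3\<close>: then
  \<open>k x \<equiv> 3 x + 3 j (4 x - 2 n) (mod 6 n)\<close>, and for the least \<open>j\<close> making this at least
  \<open>2 n\<close> it stays below \<open>4 n\<close>, because the increment \<open>3 (4 x - 2 n)\<close> is below \<open>2 n\<close>.\<close>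
lemma good_tilt_exists:
  fixes n x :: nat
  assumes "3 dvd n" "3 dvd x" "x < n" "n < 2 * x"
  obtains k where "odd k" "3 dvd k" "k \<le> 2 * n"
    "2 * n \<le> k * x mod (3 * (2 * n))" "k * x mod (3 * (2 * n)) \<le> 2 * (2 * n)"
proof (cases "2 * n \<le> 3 * x")
  case True
  moreover have "3 * x < 3 * (2 * n)" "3 \<le> 2 * n" using assms by auto
  ultimately show ?thesis using that[of 3] assms(3) by simp
next
  case False
  define e where "e = 4 * x - 2 * n"
  have e: "e + 2 * n = 4 * x" "6 \<le> e" using assms unfolding e_def by presburger+
  define reaches where "reaches j \<longleftrightarrow> 2 * n \<le> 3 * x + 3 * (j * e)" for j
  have "reaches (2 * n)" "\<not> reaches 0"
    using e(2) False unfolding reaches_def by (simp_all add: trans_le_add2)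
  then obtain j where "reaches j" "\<not> reaches (j - 1)" "0 < j"
    using ex_least_nat_le[of reaches] by (metis diff_less gr0I less_one)
  then obtain i where j: "j = Suc i" "2 * n \<le> 3 * x + 3 * (j * e)" "3 * x + 3 * (i * e) < 2 * n"
    unfolding reaches_def by (metis Suc_pred not_le diff_Suc_1)
  define v where "v = 3 * x + 3 * (j * e)"
  have "6 * i \<le> i * e" "j * e = i * e + e" using e(2) j(1) by simp_all
  then have small_i: "36 * i < n" and v: "v < 4 * n"
    using j(3) e(1) assms(4) False unfolding v_def by linarith+
  have "(12 * j + 3) * x = v + 3 * (2 * n) * j"
  proof -
    have "(12 * j + 3) * x = 3 * x + 3 * j * (e + 2 * n)" using e(1) by (simp add: algebra_simps)
    then show ?thesis unfolding v_def by (simp add: algebra_simps)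
  qed
  then have "(12 * j + 3) * x mod (3 * (2 * n)) = v" using v by simp
  moreover have "12 * j + 3 \<le> 2 * n"
  proof -
    have "9 \<le> n" using assms by presburger
    then show ?thesis using small_i j(1) by linarith
  qed
  moreover have "odd (12 * j + 3)" "3 dvd (12 * j + 3)" by presburger+
  ultimately show ?thesis using that[of "12 * j + 3"] j(2) v unfolding v_def by simp
qed

theorem word_representable_circulant_n_lt_2x:
  fixes n x :: nat
  assumes "3 dvd n" "3 dvd x" "x < n" "n < 2 * x"
  shows "word_representable {0..<2 * n} (circ_adj (2 * n) {1, x, n})"
proof -
  obtain k where k: "odd k" "3 dvd k" "k \<le> 2 * n"
    "2 * n \<le> k * x mod (3 * (2 * n))" "k * x mod (3 * (2 * n)) \<le> 2 * (2 * n)"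
    using good_tilt_exists[OF assms] .
  have n: "0 < 2 * n" "3 dvd 2 * n" using assms by auto
  have "\<forall>d\<in>{1, x, n}. good_jump k (2 * n) d"
    using good_jump_1[OF n(1) k(3)] good_jump_multiple_of_3[OF n(1) assms(2) k(4,5)]
      good_jump_half[OF k(1,2) assms(1)] n by simp
  from tilted_colouring_proper[OF n k(2) this]
  show ?thesis
    by (intro word_representable_if_3_colouring[where colour = "tilted_colouring k (2 * n)"])
      (auto simp: tilted_colouring_def circ_adj_commute)
qed

text \<open>A vertex \<open>q x + r\<close> (\<open>q < 4\<close>, \<open>r < x\<close>) of \<open>C\<^sub>4\<^sub>x(1, x, 2x)\<close> is encoded
  by the pair \<open>(q, r)\<close>; \<open>block_step x\<close> lists the edges from a vertex to a larger one.\<close>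
definition block_step :: "nat \<Rightarrow> nat \<times> nat \<Rightarrow> nat \<times> nat \<Rightarrow> bool" where
  "block_step x = (\<lambda>(q, r) (q', r').
     (q' = q \<and> r' = Suc r) \<or> (q' = Suc q \<and> Suc r = x \<and> r' = 0) \<or> (r' = r \<and> q < q')
     \<or> (q = 0 \<and> r = 0 \<and> q' = 3 \<and> Suc r' = x))"

definition block_colour :: "nat \<times> nat \<Rightarrow> nat" where
  "block_colour = (\<lambda>(q, r). (r mod 2 + 3 * q) mod 4)"

definition parity_rank :: "nat \<Rightarrow> nat" where
  "parity_rank r = (if odd r then 2 else if r = 0 then 0 else 1)"

lemma block_step_cases:
  assumes "block_step x (q, r) (q', r')"
  obtains (step) "q' = q" "r' = Suc r"
  | (carry) "q' = Suc q" "Suc r = x" "r' = 0"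
  | (jump) "r' = r" "q < q'"
  | (wrap) "q = 0" "r = 0" "q' = 3" "Suc r' = x"
  using assms unfolding block_step_def by auto

lemma quarter_parity_cases:
  fixes q r :: nat
  assumes "q < 4"
  shows "(q = 0 \<or> q = 1 \<or> q = 2 \<or> q = 3) \<and> (r mod 2 = 0 \<or> r mod 2 = 1)"
  using assms by auto

lemmas block_simps = block_colour_def parity_rank_def mod_Suc odd_iff_mod_2_eq_one

lemma block_step_colour_neq:
  assumes "q' < 4" "block_step x (q, r) (q', r')"
  shows "block_colour (q', r') \<noteq> block_colour (q, r)"
proof -
  note q' = quarter_parity_cases[OF assms(1)]
  from assms(2) show ?thesis
  proof (cases rule: block_step_cases)
    case step
    then show ?thesis using q'[of r] by (elim conjE disjE; simp add: block_simps)
  next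
    case carry
    then show ?thesis using q'[of r] by (elim conjE disjE; simp add: block_simps)
  next
    case jump
    then have "q < 4" using assms(1) by simp
    then show ?thesis using jump q'[of r] quarter_parity_cases[of q r]
      by (auto simp: block_simps)
  next
    case wrap
    then show ?thesis using q'[of r'] by (elim conjE disjE; simp add: block_simps)
  qed
qed

lemma block_step_rank:
  assumes "q < 4" "q' < 4" "block_step x (q, r) (q', r') \<or> block_step x (q', r') (q, r)"
    and "block_colour (q', r') = Suc (block_colour (q, r)) mod 4"
  shows "parity_rank r < parity_rank r' \<or> (r' = r \<and> q' = (q + 3) mod 4)"
proof -
  note q = quarter_parity_cases[OF assms(1)] and q' = quarter_parity_cases[OF assms(2)]
  from assms(3) show ?thesis
  proof
    assume "block_step x (q, r) (q', r')"
    then show ?thesis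
    proof (cases rule: block_step_cases)
      case step
      then show ?thesis using q[of r] assms(4) by (elim conjE disjE; simp add: block_simps)
    next
      case carry
      then show ?thesis using q[of r] assms(4) by (elim conjE disjE; simp add: block_simps)
    next
      case jump
      then show ?thesis using q[of r] q'[of r] assms(4) by (elim conjE disjE; simp add: block_simps)
    next
      case wrap
      then show ?thesis using q'[of r'] assms(4) by (elim conjE disjE; simp add: block_simps)
    qed
  next
    assume "block_step x (q', r') (q, r)"
    then show ?thesis
    proof (cases rule: block_step_cases)
      case step
      then show ?thesis using q'[of r'] assms(4) by (elim conjE disjE; simp add: block_simps)
    next
      case carry
      then show ?thesis using q'[of r'] assms(4) by (elim conjE disjE; simp add: block_simps)
    next
      case jump
      then show ?thesis using q[of r] q'[of r] assms(4) by (elim conjE disjE; simp add: block_simps)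
    next
      case wrap
      then show ?thesis using q[of r] assms(4) by (elim conjE disjE; simp add: block_simps)
    qed
  qed
qed

lemma block_step_if_circ_adj:
  assumes "x \<noteq> 0" "u \<le> v" "v < 4 * x" "circ_adj (4 * x) {1, x, 2 * x} u v"
  shows "block_step x (u div x, u mod x) (v div x, v mod x)"
  using assms(2-4)
proof (cases rule: circ_adj_cases)
  case (forward d)
  then consider "v = Suc u" | "v = u + x" | "v = u + 2 * x" by auto
  then show ?thesis
  proof cases
    case 1
    then show ?thesis by (cases "Suc (u mod x) = x") (simp_all add: block_step_def div_Suc mod_Suc)
  qed (use assms(1) in \<open>simp_all add: block_step_def div_add_self2\<close>)
next
  case (around d)
  then consider "u = 0" "v = 4 * x - 1" | "v = u + 3 * x" | "v = u + 2 * x"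
    using assms(1,3) by auto
  then show ?thesis
  proof cases
    case 1
    have "v div x = 3" "v mod x = x - 1"
      unfolding 1 using assms(1) by (auto intro: div_nat_eqI mod_nat_eqI)
    then show ?thesis using 1 assms(1) by (simp add: block_step_def)
  qed (use assms(1) in \<open>simp_all add: block_step_def div_add_self2\<close>)
qed

definition quarter_colour :: "nat \<Rightarrow> nat \<Rightarrow> nat" where
  "quarter_colour x i = block_colour (i div x, i mod x)"

lemma block_step_if_circ_adj_either:
  assumes "x \<noteq> 0" "u < 4 * x" "v < 4 * x" "circ_adj (4 * x) {1, x, 2 * x} u v"
  shows "block_step x (u div x, u mod x) (v div x, v mod x) \<or>
    block_step x (v div x, v mod x) (u div x, u mod x)"
  using block_step_if_circ_adj[OF assms(1) _ assms(3,4)]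
    block_step_if_circ_adj[OF assms(1) _ assms(2), of v] assms(4) circ_adj_commute
  by (metis nat_le_linear)

lemma quarter_colour_proper:
  assumes "x \<noteq> 0" "u < 4 * x" "v < 4 * x" "circ_adj (4 * x) {1, x, 2 * x} u v"
  shows "quarter_colour x u \<noteq> quarter_colour x v"
  using block_step_if_circ_adj_either[OF assms] block_step_colour_neq
    less_mult_imp_div_less[OF assms(2)] less_mult_imp_div_less[OF assms(3)]
  unfolding quarter_colour_def by metis

lemma quarter_rank_step:
  assumes "x \<noteq> 0" "u < 4 * x" "v < 4 * x" "circ_adj (4 * x) {1, x, 2 * x} u v"
    and "quarter_colour x v = Suc (quarter_colour x u) mod 4"
  shows "parity_rank (u mod x) < parity_rank (v mod x) \<or>
    (v mod x = u mod x \<and> v div x = (u div x + 3) mod 4)"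
  using block_step_rank[OF less_mult_imp_div_less[OF assms(2)] less_mult_imp_div_less[OF assms(3)]
      block_step_if_circ_adj_either[OF assms(1-4)]] assms(5)
  unfolding quarter_colour_def by blast

lemma circ_adj_opposite:
  assumes "x \<noteq> 0" "u < 4 * x" "v mod x = u mod x" "v div x = (u div x + 2) mod 4"
  shows "circ_adj (4 * x) {1, x, 2 * x} u v"
proof -
  have u: "u = u div x * x + u mod x" and v: "v = v div x * x + v mod x" by simp_all
  have "q < 4 \<Longrightarrow> q' = (q + 2) mod 4 \<Longrightarrow> q' = q + 2 \<or> q = q' + 2" for q q' :: nat
    by presburger
  then consider "v div x = u div x + 2" | "u div x = v div x + 2"
    using less_mult_imp_div_less[OF assms(2)] assms(4) by blast
  then have "v = u + 2 * x \<or> u = v + 2 * x"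
  proof cases
    case 1
    then show ?thesis using u v assms(3) by (metis add.assoc add.commute add_mult_distrib)
  next
    case 2
    then show ?thesis using u v assms(3) by (metis add.assoc add.commute add_mult_distrib)
  qed
  then show ?thesis unfolding circ_adj_def Let_def by auto
qed

lemma quarter_chords:
  assumes "x \<noteq> 0" "a < 4 * x" "b < 4 * x" "c < 4 * x" "d < 4 * x"
    and "quarter_colour x a = 0" "quarter_colour x b = 1" "quarter_colour x c = 2" "quarter_colour x d = 3"
    and "circ_adj (4 * x) {1, x, 2 * x} a b" "circ_adj (4 * x) {1, x, 2 * x} b c"
      "circ_adj (4 * x) {1, x, 2 * x} c d" "circ_adj (4 * x) {1, x, 2 * x} a d"
  shows "circ_adj (4 * x) {1, x, 2 * x} a c \<and> circ_adj (4 * x) {1, x, 2 * x} b d"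
proof -
  let ?rank = "\<lambda>i. parity_rank (i mod x)"
  note step = quarter_rank_step[OF assms(1)]
  have ab: "?rank a < ?rank b \<or> (b mod x = a mod x \<and> b div x = (a div x + 3) mod 4)"
    using step[OF assms(2,3,10)] assms(6,7) by simp
  have bc: "?rank b < ?rank c \<or> (c mod x = b mod x \<and> c div x = (b div x + 3) mod 4)"
    using step[OF assms(3,4,11)] assms(7,8) by simp
  have cd: "?rank c < ?rank d \<or> (d mod x = c mod x \<and> d div x = (c div x + 3) mod 4)"
    using step[OF assms(4,5,12)] assms(8,9) by simp
  have "?rank d < ?rank a \<or> a mod x = d mod x"
    using step[OF assms(5,2) assms(13)[unfolded circ_adj_commute[of _ _ a d]]] assms(6,9) by auto
  then have "?rank d \<le> ?rank a" by auto
  with ab bc cd have "b mod x = a mod x" "c mod x = b mod x" "d mod x = c mod x"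
    and "b div x = (a div x + 3) mod 4" "c div x = (b div x + 3) mod 4"
      "d div x = (c div x + 3) mod 4"
    by (auto dest: arg_cong[of _ _ parity_rank])
  moreover have "qc = (qa + 2) mod 4 \<and> qd = (qb + 2) mod 4"
    if "qb = (qa + 3) mod 4" "qc = (qb + 3) mod 4" "qd = (qc + 3) mod 4" for qa qb qc qd :: nat
    using that by presburger
  ultimately have "c mod x = a mod x" "c div x = (a div x + 2) mod 4"
    "d mod x = b mod x" "d div x = (b div x + 2) mod 4"
    by simp_all
  then show ?thesis using circ_adj_opposite[OF assms(1,2)] circ_adj_opposite[OF assms(1,3)] by blast
qed

theorem word_representable_circulant_4x:
  assumes "x \<noteq> 0"
  shows "word_representable {0..<4 * x} (circ_adj (4 * x) {1, x, 2 * x})"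
proof (rule word_representable_if_layering[where layer = "quarter_colour x"])
  show "quarter_colour x u < 4" for u by (simp add: quarter_colour_def block_colour_def split: prod.split)
qed (use assms quarter_colour_proper quarter_chords circ_adj_commute in auto)

theorem corollary3:
  fixes n x :: nat
  assumes "1 < x" and "x < n"
    and "n mod 3 = 0" and "x mod 3 = 0"
    and "n \<le> 2 * x" and "x \<le> n"
  shows "word_representable (circ_vertices (2 * n)) (circ_adj (2 * n) {1, x, n})"
proof -
  have vertices: "circ_vertices (2 * n) = {0..<2 * n}" by (simp add: circ_vertices_def)
  consider "n = 2 * x" | "n < 2 * x" using assms(5) by linarith
  then show ?thesis
  proof cases
    case 1
    then show ?thesis
      using word_representable_circulant_4x[of x] assms(1) vertices by simp
  next
    case 2
    then show ?thesis
      using word_representable_circulant_n_lt_2x[of n x] assms(2-4) vertices by (simp add: dvd_eq_mod_eq_0)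
  qed
qed

end
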